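(* Let $p$ be a prime and let $k,N$ be positive integers. For any positive integer $n\geq N$, \[ \sum_{i=0}^{\varphi(p^N)-1}B^{(-k)}_{n+i}\equiv \sum_{i=0}^{\varphi(p^N)-1}B^{(-n-i)}_{k}\equiv 0\pmod{p^N}. \]
   Context: For any integer $k$, let $\mathrm{Li}_k(t)=\sum_{n=1}^{\infty} t^n/n^k$. The poly-Bernoulli numbers $B^{(k)}_n$ ($n\ge 0$) are defined by $\frac{\mathrm{Li}_k(1-e^{-t})}{1-e^{-t}}=\sum_{n=0}^{\infty}B^{(k)}_n\frac{t^n}{n!}$. For negative upper index these are integers. $\varphi$ denotes Euler's totient function, so $\varphi(p^N)=p^{N-1}(p-1)$. *)

theory Defs
  imports "HOL-Computational_Algebra.Formal_Power_Series" "HOL-Number_Theory.Number_Theory"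
begin

text \<open>Li_{-k}(x) = sum_{n>=1} n^k x^n as a formal power series in x (k :: nat, index -k).\<close>
definition polylog_neg_fps :: "nat \<Rightarrow> rat fps" where
  "polylog_neg_fps k = Abs_fps (\<lambda>n. if n = 0 then 0 else of_nat n ^ k)"

definition one_minus_exp_neg :: "rat fps" where
  "one_minus_exp_neg = 1 - fps_exp (-1)"

definition poly_bernoulli_gf :: "nat \<Rightarrow> rat fps" where
  "poly_bernoulli_gf k = fps_compose (polylog_neg_fps k) one_minus_exp_neg / one_minus_exp_neg"

text \<open>poly_bernoulli_neg k n = B_n^{(-k)}.\<close>
definition poly_bernoulli_neg :: "nat \<Rightarrow> nat \<Rightarrow> rat" where
  "poly_bernoulli_neg k n = fact n * fps_nth (poly_bernoulli_gf k) n"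

end

theory Submission
  imports Defs "HOL-Combinatorics.Stirling"
begin

text \<open>
  Put x = 1 - e^(-t). The generating function of B_n^(-k) is sum_m (m+1)^k x^m, and
  n! [t^n] x^m = (-1)^(n+m) m! S(n,m); this gives Kaneko's formula
  B_n^(-k) = sum_m (-1)^(n+m) m! S(n,m) (m+1)^k. The recurrence G_(k+1) = G_k + (e^t - 1) G_k'
  of the generating functions yields G_k = sum_m (-1)^(k+m) m! S(k,m) e^((m+1)t), whence the
  duality B_n^(-k) = B_k^(-n). So both sums of the theorem equal
  sum_(m<=k) (-1)^(k+m) m! S(k,m) (m+1)^n sum_(i<phi(p^N)) (m+1)^i, and every summand is divisible
  by p^N: for m = 0 because S(k,0) = 0; if p divides m+1 because of the factor (m+1)^n with n >= N;
  if p divides neither m nor m+1 by Euler's theorem, since m times the geometric sum is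
  (m+1)^phi(p^N) - 1; and if p divides m > 0 because p divides m!, while the geometric sum has
  ratio congruent to 1 mod p and length p^(N-1) (p-1), hence is divisible by p^(N-1).
\<close>

unbundle fps_syntax

definition succ_power_fps :: "nat \<Rightarrow> rat fps" where
  "succ_power_fps k = Abs_fps (\<lambda>n. of_nat (n + 1) ^ k)"

lemma polylog_neg_fps_eq: "polylog_neg_fps k = fps_X * succ_power_fps k"
  by (simp add: fps_eq_iff polylog_neg_fps_def succ_power_fps_def)

lemma succ_power_fps_Suc:
  "succ_power_fps (Suc k) = succ_power_fps k + fps_X * fps_deriv (succ_power_fps k)"
  by (auto simp: fps_eq_iff succ_power_fps_def fps_deriv_def algebra_simps)

lemma one_minus_exp_neg_nth_0 [simp]: "one_minus_exp_neg $ 0 = 0"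
  by (simp add: one_minus_exp_neg_def)

lemma one_minus_exp_neg_nonzero: "one_minus_exp_neg \<noteq> 0"
proof
  assume "one_minus_exp_neg = 0"
  then have "one_minus_exp_neg $ 1 = 0" by simp
  then show False by (simp add: one_minus_exp_neg_def)
qed

lemma one_minus_one_minus_exp_neg: "1 - one_minus_exp_neg = fps_exp (-1)"
  by (simp add: one_minus_exp_neg_def)

lemma fps_deriv_one_minus_exp_neg: "fps_deriv one_minus_exp_neg = fps_exp (-1)"
proof -
  have "fps_const (-1::rat) = - 1" by (metis fps_const_1_eq_1 fps_const_neg)
  then show ?thesis by (simp add: one_minus_exp_neg_def)
qed

lemma poly_bernoulli_gf_eq_compose:
  "poly_bernoulli_gf k = succ_power_fps k oo one_minus_exp_neg"
proof -
  have "poly_bernoulli_gf k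
      = (one_minus_exp_neg * (succ_power_fps k oo one_minus_exp_neg)) / one_minus_exp_neg"
    unfolding poly_bernoulli_gf_def polylog_neg_fps_eq by (simp add: fps_compose_mult_distrib)
  then show ?thesis using one_minus_exp_neg_nonzero by simp
qed

lemma poly_bernoulli_gf_0: "poly_bernoulli_gf 0 = fps_exp 1"
proof -
  have "(1 - fps_X) * succ_power_fps 0 = 1"
    by (auto simp: fps_eq_iff succ_power_fps_def algebra_simps)
  then have "((1 - fps_X) * succ_power_fps 0) oo one_minus_exp_neg = 1" by simp
  then have "fps_exp (-1) * poly_bernoulli_gf 0 = fps_exp (-1) * fps_exp 1"
    by (simp add: fps_compose_mult_distrib fps_compose_sub_distrib one_minus_one_minus_exp_neg
        poly_bernoulli_gf_eq_compose flip: fps_exp_add_mult)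
  moreover have "fps_exp (-1::rat) \<noteq> 0"
  proof
    assume "fps_exp (-1::rat) = 0"
    then have "fps_exp (-1::rat) $ 0 = 0" by simp
    then show False by simp
  qed
  ultimately show ?thesis by simp
qed

lemma poly_bernoulli_gf_Suc:
  "poly_bernoulli_gf (Suc k) = poly_bernoulli_gf k + (fps_exp 1 - 1) * fps_deriv (poly_bernoulli_gf k)"
proof -
  let ?x = one_minus_exp_neg and ?M = "succ_power_fps k"
  have deriv: "fps_deriv (poly_bernoulli_gf k) = (fps_deriv ?M oo ?x) * fps_exp (-1)"
    by (simp add: poly_bernoulli_gf_eq_compose fps_compose_deriv fps_deriv_one_minus_exp_neg)
  have x_eq: "(fps_exp 1 - 1) * fps_exp (-1) = ?x"
    by (simp add: algebra_simps one_minus_exp_neg_def flip: fps_exp_add_mult)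
  have "poly_bernoulli_gf (Suc k) = poly_bernoulli_gf k + ?x * (fps_deriv ?M oo ?x)"
    unfolding poly_bernoulli_gf_eq_compose succ_power_fps_Suc
    by (simp add: fps_compose_add_distrib fps_compose_mult_distrib)
  also have "\<dots> = poly_bernoulli_gf k + (fps_exp 1 - 1) * fps_deriv (poly_bernoulli_gf k)"
    unfolding deriv x_eq[symmetric] by (simp add: algebra_simps)
  finally show ?thesis .
qed

text \<open>m! S(n,m) is the number of surjections from an n-set onto an m-set.\<close>

definition signed_surj :: "nat \<Rightarrow> nat \<Rightarrow> int" where
  "signed_surj n m = (-1) ^ (n + m) * fact m * int (Stirling n m)"

lemma signed_surj_0_left [simp]: "signed_surj 0 m = (if m = 0 then 1 else 0)"
  by (cases m) (simp_all add: signed_surj_def)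

lemma signed_surj_Suc_0 [simp]: "signed_surj (Suc n) 0 = 0"
  by (simp add: signed_surj_def)

lemma signed_surj_Suc_Suc:
  "signed_surj (Suc n) (Suc m) = int (Suc m) * (signed_surj n m - signed_surj n (Suc m))"
  by (simp add: signed_surj_def algebra_simps)

lemma signed_surj_eq_0: "n < m \<Longrightarrow> signed_surj n m = 0"
  by (simp add: signed_surj_def)

lemma fact_dvd_signed_surj: "fact m dvd signed_surj n m"
  by (simp add: signed_surj_def)

lemma fact_mult_one_minus_exp_neg_power_nth:
  "fact n * (one_minus_exp_neg ^ m $ n) = of_int (signed_surj n m)"
proof (induction n arbitrary: m)
  case 0
  then show ?case by (cases m) auto
next
  case (Suc n)
  let ?x = one_minus_exp_neg
  show ?case
  proof (cases m)
    case 0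
    then show ?thesis by simp
  next
    case (Suc j)
    have deriv: "fps_deriv (?x ^ Suc j) = fps_const (of_nat (Suc j)) * (?x ^ j - ?x ^ Suc j)"
    proof -
      have "fps_deriv (?x ^ Suc j) = of_nat (Suc j) * fps_deriv ?x * ?x ^ j"
        by (simp only: fps_deriv_power' diff_Suc_1)
      also have "\<dots> = of_nat (Suc j) * (?x ^ j - ?x ^ Suc j)"
        unfolding fps_deriv_one_minus_exp_neg one_minus_one_minus_exp_neg[symmetric]
        by (simp only: power_Suc right_diff_distrib mult.assoc left_diff_distrib mult_1_left)
      finally show ?thesis by (simp only: fps_of_nat)
    qed
    have "fact (Suc n) * (?x ^ m $ Suc n) = fact n * (fps_deriv (?x ^ m) $ n)"
      by (simp add: algebra_simps)
    also have "\<dots> = of_nat (Suc j) * (fact n * (?x ^ j $ n) - fact n * (?x ^ Suc j $ n))"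
      unfolding Suc deriv fps_mult_left_const_nth by (simp add: algebra_simps)
    also have "\<dots> = of_int (signed_surj (Suc n) m)"
      using Suc.IH[of j] Suc.IH[of "Suc j"] Suc
      by (simp del: power_Suc add: signed_surj_Suc_Suc algebra_simps)
    finally show ?thesis .
  qed
qed

lemma poly_bernoulli_neg_eq_sum_Stirling:
  "poly_bernoulli_neg k n = (\<Sum>m\<le>n. of_int (signed_surj n m) * of_nat (m + 1) ^ k)"
proof -
  have "poly_bernoulli_neg k n
      = (\<Sum>m\<le>n. of_nat (m + 1) ^ k * (fact n * (one_minus_exp_neg ^ m $ n)))"
    unfolding poly_bernoulli_neg_def poly_bernoulli_gf_eq_compose fps_compose_nth
    by (simp add: succ_power_fps_def sum_distrib_left atLeast0AtMost algebra_simps)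
  then show ?thesis by (simp add: fact_mult_one_minus_exp_neg_power_nth mult.commute)
qed

lemma poly_bernoulli_gf_eq_sum_exp:
  "poly_bernoulli_gf k = (\<Sum>m\<le>k. fps_const (of_int (signed_surj k m)) * fps_exp (of_nat (m + 1)))"
proof (induction k)
  case 0
  then show ?case by (simp add: poly_bernoulli_gf_0)
next
  case (Suc k)
  define c where "c m = fps_const (rat_of_int (signed_surj k m))" for m
  define E where "E m = fps_exp (rat_of_nat m)" for m
  define g where "g m = fps_const (of_nat m) * c m * E (Suc m)" for m
  have IH: "poly_bernoulli_gf k = (\<Sum>m\<le>k. c m * E (Suc m))"
    using Suc.IH by (simp add: c_def E_def)
  have step: "(fps_exp 1 - 1) * fps_deriv (c m * E (Suc m))
      = fps_const (of_nat (Suc m)) * c m * (E (Suc (Suc m)) - E (Suc m))" for m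
  proof -
    have deriv: "fps_deriv (c m * E (Suc m)) = fps_const (of_nat (Suc m)) * c m * E (Suc m)"
      by (simp add: c_def E_def mult.commute mult.left_commute del: of_nat_Suc)
    have shift: "(fps_exp 1 - 1) * E (Suc m) = E (Suc (Suc m)) - E (Suc m)"
      by (simp add: E_def algebra_simps flip: fps_exp_add_mult)
    have "(fps_exp 1 - 1) * fps_deriv (c m * E (Suc m))
        = fps_const (of_nat (Suc m)) * c m * ((fps_exp 1 - 1) * E (Suc m))"
      unfolding deriv by (simp only: mult.commute mult.left_commute)
    then show ?thesis unfolding shift .
  qed
  have "poly_bernoulli_gf (Suc k) = (\<Sum>m\<le>k. c m * E (Suc m))
      + (\<Sum>m\<le>k. fps_const (of_nat (Suc m)) * c m * (E (Suc (Suc m)) - E (Suc m)))"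
    unfolding poly_bernoulli_gf_Suc IH fps_deriv_sum sum_distrib_left step ..
  also have "\<dots> = (\<Sum>m\<le>k. fps_const (of_nat (Suc m)) * c m * E (Suc (Suc m))) - (\<Sum>m\<le>k. g m)"
    unfolding g_def by (simp add: algebra_simps sum.distrib sum_subtractf flip: fps_const_add)
  also have "(\<Sum>m\<le>k. g m) = (\<Sum>m\<le>k. g (Suc m))"
  proof -
    have "(\<Sum>m\<le>Suc k. g m) = (\<Sum>m\<le>k. g (Suc m))"
      unfolding sum.atMost_Suc_shift by (simp add: g_def)
    moreover have "g (Suc k) = 0" by (simp add: g_def c_def signed_surj_eq_0)
    ultimately show ?thesis by simp
  qed
  also have "(\<Sum>m\<le>k. fps_const (of_nat (Suc m)) * c m * E (Suc (Suc m))) - (\<Sum>m\<le>k. g (Suc m))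
      = (\<Sum>m\<le>k. fps_const (of_int (signed_surj (Suc k) (Suc m))) * E (Suc (Suc m)))"
    unfolding sum_subtractf[symmetric]
  proof (rule sum.cong)
    fix m
    have "fps_const (of_int (signed_surj (Suc k) (Suc m))) = fps_const (of_nat (Suc m)) * (c m - c (Suc m))"
      by (simp only: signed_surj_Suc_Suc of_int_mult of_int_diff of_int_of_nat_eq c_def
          fps_const_mult fps_const_sub)
    then show "fps_const (of_nat (Suc m)) * c m * E (Suc (Suc m)) - g (Suc m)
        = fps_const (of_int (signed_surj (Suc k) (Suc m))) * E (Suc (Suc m))"
      by (simp only: g_def right_diff_distrib left_diff_distrib mult.assoc)
  qed simp
  also have "\<dots> = (\<Sum>m\<le>Suc k. fps_const (of_int (signed_surj (Suc k) m)) * fps_exp (of_nat (m + 1)))"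
    unfolding sum.atMost_Suc_shift by (simp add: E_def)
  finally show ?case .
qed

lemma poly_bernoulli_neg_duality: "poly_bernoulli_neg k n = poly_bernoulli_neg n k"
proof -
  have "poly_bernoulli_neg k n = (\<Sum>m\<le>k. of_int (signed_surj k m) * of_nat (m + 1) ^ n)"
    unfolding poly_bernoulli_neg_def poly_bernoulli_gf_eq_sum_exp fps_sum_nth
    by (simp add: sum_distrib_left)
  then show ?thesis by (simp add: poly_bernoulli_neg_eq_sum_Stirling)
qed

lemma geometric_sum_mult_length:
  fixes a :: "'a::comm_semiring_1"
  shows "(\<Sum>i<r * s. a ^ i) = (\<Sum>i<s. a ^ i) * (\<Sum>j<r. (a ^ s) ^ j)"
proof -
  have "(\<Sum>i<r * s. a ^ i) = (\<Sum>j<r. \<Sum>i\<in>{j * s..<j * s + s}. a ^ i)"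
    by (rule sum.nat_group[symmetric])
  also have "\<dots> = (\<Sum>j<r. (a ^ s) ^ j * (\<Sum>i<s. a ^ i))"
  proof (rule sum.cong)
    fix j
    have "(\<Sum>i\<in>{j * s..<j * s + s}. a ^ i) = (\<Sum>i<s. a ^ (j * s + i))"
      by (rule sum.reindex_bij_witness[where i="\<lambda>i. j * s + i" and j="\<lambda>i. i - j * s"]) auto
    also have "\<dots> = (a ^ s) ^ j * (\<Sum>i<s. a ^ i)"
      unfolding sum_distrib_left
      by (rule sum.cong) (simp_all add: power_add mult.commute flip: power_mult)
    finally show "(\<Sum>i\<in>{j * s..<j * s + s}. a ^ i) = (a ^ s) ^ j * (\<Sum>i<s. a ^ i)" .
  qed simp
  finally show ?thesis by (metis (no_types, lifting) sum_distrib_right mult.commute sum.cong)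
qed

lemma power_dvd_geometric_sum:
  fixes a :: int and q :: nat
  assumes "[a = 1] (mod int q)"
  shows "int q ^ s dvd (\<Sum>i<q ^ s. a ^ i)"
proof (induction s)
  case 0
  then show ?case by simp
next
  case (Suc s)
  have "[(\<Sum>j<q. (a ^ q ^ s) ^ j) = (\<Sum>j<q. 1)] (mod int q)"
  proof (rule cong_sum)
    fix j
    have "[(a ^ q ^ s) ^ j = (1 ^ q ^ s) ^ j] (mod int q)"
      by (intro cong_pow assms)
    then show "[(a ^ q ^ s) ^ j = 1] (mod int q)" by simp
  qed
  then have "int q dvd (\<Sum>j<q. (a ^ q ^ s) ^ j)"
    by (simp add: cong_dvd_iff)
  with Suc.IH have "int q ^ s * int q dvd (\<Sum>i<q ^ s. a ^ i) * (\<Sum>j<q. (a ^ q ^ s) ^ j)"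
    by (rule mult_dvd_mono)
  then show ?case
    by (simp add: geometric_sum_mult_length mult.commute)
qed

lemma prime_power_dvd_geometric_sum_totient:
  fixes a :: int
  assumes "prime p" and "[a = 1] (mod int p)"
  shows "int p ^ N dvd (\<Sum>i<totient (p ^ Suc N). a ^ i)"
proof -
  have "totient (p ^ Suc N) = (p - 1) * p ^ N"
    using totient_prime_power_Suc[OF assms(1), of N] by (simp only: mult.commute)
  then show ?thesis
    using power_dvd_geometric_sum[OF assms(2), of N] by (simp add: geometric_sum_mult_length)
qed

lemma dvd_geometric_sum_totient:
  fixes m q :: nat
  assumes "coprime m q" and "coprime (Suc m) q"
  shows "int q dvd (\<Sum>i<totient q. int (Suc m) ^ i)"
proof -
  have "[Suc m ^ totient q = 1] (mod q)"
    using assms(2) by (rule euler_theorem)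
  then have "int q dvd int (Suc m) ^ totient q - 1"
    by (metis cong_iff_dvd_diff cong_int_iff of_nat_1 of_nat_power)
  then have "int q dvd int m * (\<Sum>i<totient q. int (Suc m) ^ i)"
    by (simp add: power_diff_1_eq)
  moreover have "coprime (int q) (int m)"
    using assms(1) by (simp add: coprime_commute)
  ultimately show ?thesis
    using coprime_dvd_mult_right_iff by blast
qed

lemma prime_power_dvd_signed_surj_mult_geometric_sum:
  assumes p: "prime p" and "k \<ge> 1" and "N \<ge> 1" and "n \<ge> N"
  shows "int p ^ N dvd signed_surj k m * (\<Sum>i<totient (p ^ N). int (m + 1) ^ (n + i))"
proof -
  let ?G = "\<Sum>i<totient (p ^ N). int (m + 1) ^ i"
  have split: "(\<Sum>i<totient (p ^ N). int (m + 1) ^ (n + i)) = int (m + 1) ^ n * ?G"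
    by (simp add: power_add sum_distrib_left)
  consider "m = 0" | "p dvd m + 1" | "m > 0" "p dvd m" | "\<not> p dvd m" "\<not> p dvd m + 1"
    by blast
  then show ?thesis
  proof cases
    case 1
    with \<open>k \<ge> 1\<close> show ?thesis by (cases k) simp_all
  next
    case 2
    then have "int p dvd int (m + 1)"
      by (simp only: of_nat_dvd_iff)
    then have "int p ^ N dvd int (m + 1) ^ N"
      by (rule dvd_power_same)
    also have "\<dots> dvd int (m + 1) ^ n"
      using \<open>n \<ge> N\<close> by (rule le_imp_power_dvd)
    finally show ?thesis unfolding split by simp
  next
    case 3
    obtain N' where N: "N = Suc N'" using \<open>N \<ge> 1\<close> by (cases N) auto
    have "p dvd fact m"
      using 3 by (simp add: dvd_fact dvd_imp_le prime_gt_0_nat[OF p])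
    then have "int p dvd signed_surj k m"
      by (metis dvd_trans fact_dvd_signed_surj of_nat_dvd_iff of_nat_fact)
    moreover have "[int (m + 1) = 1] (mod int p)"
      using 3 by (simp add: cong_iff_dvd_diff)
    then have "int p ^ N' dvd ?G"
      unfolding N by (rule prime_power_dvd_geometric_sum_totient[OF p])
    ultimately have "int p * int p ^ N' dvd signed_surj k m * ?G"
      by (rule mult_dvd_mono)
    then have "int p ^ N dvd signed_surj k m * ?G"
      by (simp add: N)
    then show ?thesis
      unfolding split by (metis dvd_mult mult.left_commute)
  next
    case 4
    then have "coprime p m" "coprime p (Suc m)"
      by (simp_all add: p prime_imp_coprime)
    then have "coprime m (p ^ N)" "coprime (Suc m) (p ^ N)"
      by (simp_all add: coprime_commute)
    then have "int (p ^ N) dvd ?G"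
      by (metis dvd_geometric_sum_totient Suc_eq_plus1)
    then show ?thesis unfolding split by simp
  qed
qed

theorem theorem3p6:
  fixes p k N n :: nat
  assumes "prime p" and "k \<ge> 1" and "N \<ge> 1" and "n \<ge> N"
  shows "(\<exists>m::int. (\<Sum>i<totient (p ^ N). poly_bernoulli_neg k (n + i)) = of_int m
            \<and> int p ^ N dvd m)
       \<and> (\<exists>m::int. (\<Sum>i<totient (p ^ N). poly_bernoulli_neg (n + i) k) = of_int m
            \<and> int p ^ N dvd m)"
proof -
  define S where "S = (\<Sum>m\<le>k. signed_surj k m * (\<Sum>i<totient (p ^ N). int (m + 1) ^ (n + i)))"
  have sum_eq: "(\<Sum>i<totient (p ^ N). poly_bernoulli_neg (n + i) k) = of_int S"
    unfolding poly_bernoulli_neg_eq_sum_Stirling S_def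
    by (simp add: sum_distrib_left sum.swap[where A="{..<totient (p ^ N)}"])
  have "int p ^ N dvd S"
    unfolding S_def by (intro dvd_sum prime_power_dvd_signed_surj_mult_geometric_sum assms)
  moreover have "(\<Sum>i<totient (p ^ N). poly_bernoulli_neg k (n + i))
      = (\<Sum>i<totient (p ^ N). poly_bernoulli_neg (n + i) k)"
    by (rule sum.cong[OF refl poly_bernoulli_neg_duality])
  ultimately show ?thesis
    using sum_eq by auto
qed

end
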